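(* Assume (A1) and (A3) of the context. Let $\hat\theta_S$ be a minimizer of the restricted problem $$\min_{\theta_S}\ \ell\Big(\begin{bmatrix}\theta_S\\0\end{bmatrix}\Big)+\lambda_{n_p}\sum_{t\in S}\|\theta_t\|$$ (parameters on $S^c$ set to zero). If $d\lambda_{n_p}\le\frac{\lambda_{\min}^2}{20\lambda_{3,\max}}$ and $\max_{t\in E}\|w_t\|\le\frac{\lambda_{n_p}}{4}$, where $w=-\nabla\ell(\theta^* )$, then $\|\theta^*_S-\hat\theta_S\|\le\frac{10}{\lambda_{\min}}\sqrt d\,\lambda_{n_p}$.
   Context: Let $E=\{(u,v):1\le v\le u\le m\}$, $D=b|E|$; $f:\mathbb{R}^m\to\mathbb{R}^D$ a feature map with blocks $f_t\in\mathbb{R}^b$; $\theta=(\theta_t)_{t\in E}$; for $A\subseteq E$, $\theta_A$ is the subvector of blocks in $A$. $\|\cdot\|$: Euclidean/spectral norm; $\Lambda_{\min}$ smallest eigenvalue; for a third-order array $T$, spectral norm $\sup\{|\sum T_{ijk}a_ib_jc_k|:\|a\|=\|b\|=\|c\|=1\}$. Given samples $x_p^{(1..n_p)}$ (from $P$) and $x_q^{(1..n_q)}$ (from $Q$), $\ell(\theta)=-\frac1{n_p}\sum_i\theta^\top f(x_p^{(i)})+\log\big(\frac1{n_q}\sum_i\exp(\theta^\top f(x_q^{(i)}))\big)$. $\theta^*$ is the true parameter of the density ratio model $p(x)=q(x)\exp(\theta^{*\top}f(x))/\mathbb{E}_Q[\exp(\theta^{*\top}f)]$, $S=\{t:\theta^*_t\ne0\}$,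 $S^c=E\setminus S$, $d=|S|$; $\mathcal I=\nabla^2\ell(\theta^* )$, $\mathcal I_{SS}$ its $S\times S$ block. (A1) With probability 1, $\Lambda_{\min}(\mathcal I_{SS})\ge\lambda_{\min}>0$. (A3) With probability 1, for all $\delta$ with $\|\delta\|\le\|\theta^*\|$: $\|\nabla^2\ell(\theta^*+\delta)\|\le\lambda_{\max}<\infty$ and $\max_{t\in E}$ spectral norm of $\nabla_{\theta_t}\nabla^2\ell(\theta^*+\delta)$ $\le\lambda_{3,\max}<\infty$. *)

theory Defs
  imports "HOL-Analysis.Analysis"
begin

text \<open>Parameter vectors theta in R^D are represented as real^'b^'e: one block
  (in R^b, index type 'b) for every edge t in E (index type 'e).  A coordinate of
  R^D is a pair (t, j) :: 'e \<times> 'b.\<close>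

definition vc :: "real^'b^'e \<Rightarrow> 'e \<times> 'b \<Rightarrow> real" where
  "vc a c = a $ fst c $ snd c"

definition unitv :: "'e \<times> 'b \<Rightarrow> real^'b^'e" where
  "unitv c = (\<chi> t j. if (t, j) = c then 1 else 0)"

definition loss :: "('x \<Rightarrow> real^'b^'e) \<Rightarrow> (nat \<Rightarrow> 'x) \<Rightarrow> nat \<Rightarrow> (nat \<Rightarrow> 'x) \<Rightarrow> nat
                     \<Rightarrow> real^'b^'e \<Rightarrow> real" where
  "loss f xp np xq nq \<theta> =
     - (1 / real np) * (\<Sum>i<np. \<theta> \<bullet> f (xp i))
     + ln ((1 / real nq) * (\<Sum>i<nq. exp (\<theta> \<bullet> f (xq i))))"

definition pd :: "(real^'b^'e \<Rightarrow> real) \<Rightarrow> real^'b^'e \<Rightarrow> 'e \<times> 'b \<Rightarrow> real" where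
  "pd g x c = deriv (\<lambda>s. g (x + s *\<^sub>R unitv c)) 0"

definition grad :: "(real^'b^'e \<Rightarrow> real) \<Rightarrow> real^'b^'e \<Rightarrow> 'e \<times> 'b \<Rightarrow> real" where
  "grad g x c = pd g x c"

definition hess :: "(real^'b^'e \<Rightarrow> real) \<Rightarrow> real^'b^'e \<Rightarrow> 'e \<times> 'b \<Rightarrow> 'e \<times> 'b \<Rightarrow> real" where
  "hess g x c c' = pd (\<lambda>y. grad g y c') x c"

definition third :: "(real^'b^'e \<Rightarrow> real) \<Rightarrow> real^'b^'e
                      \<Rightarrow> 'e \<times> 'b \<Rightarrow> 'e \<times> 'b \<Rightarrow> 'e \<times> 'b \<Rightarrow> real" where
  "third g x c c' c'' = pd (\<lambda>y. hess g y c' c'') x c"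

definition matvec :: "('e \<times> 'b \<Rightarrow> 'e \<times> 'b \<Rightarrow> real) \<Rightarrow> real^'b^'e \<Rightarrow> real^'b^'e" where
  "matvec H a = (\<chi> t j. \<Sum>c\<in>UNIV. H (t, j) c * vc a c)"

definition spec2 :: "('e::finite \<times> 'b::finite \<Rightarrow> 'e \<times> 'b \<Rightarrow> real) \<Rightarrow> real" where
  "spec2 H = Sup {norm (matvec H a) | a :: real^'b^'e. norm a = 1}"

definition spec3 :: "('b::finite \<Rightarrow> 'e::finite \<times> 'b \<Rightarrow> 'e \<times> 'b \<Rightarrow> real) \<Rightarrow> real" where
  "spec3 T = Sup {\<bar>\<Sum>j\<in>UNIV. \<Sum>c\<in>UNIV. \<Sum>c'\<in>UNIV. T j c c' * (a $ j) * vc u c * vc v c'\<bar>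
                  | (a :: real^'b) (u :: real^'b^'e) (v :: real^'b^'e).
                    norm a = 1 \<and> norm u = 1 \<and> norm v = 1}"

definition coords :: "'e set \<Rightarrow> ('e \<times> 'b) set" where
  "coords A = {c. fst c \<in> A}"

definition block_eigenvalues :: "('e::finite \<times> 'b::finite \<Rightarrow> 'e \<times> 'b \<Rightarrow> real) \<Rightarrow> 'e set \<Rightarrow> real set" where
  "block_eigenvalues H A =
     {\<mu>. \<exists>v :: 'e \<times> 'b \<Rightarrow> real. (\<exists>c\<in>coords A. v c \<noteq> 0) \<and>
          (\<forall>c\<in>coords A. (\<Sum>c'\<in>coords A. H c c' * v c') = \<mu> * v c)}"

end

theory Submission
  imports Defs
begin

text \<open>Let \<Delta> = \<theta>h - \<theta>s, which is supported on S, and \<psi>(s) = l(\<theta>s + s \<Delta>). The Hessian of the loss is a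
  covariance matrix, so \<psi> is convex. By (A1), \<psi>''(0) \<ge> \<lambda>_min |\<Delta>|^2, and by (A3),
  |\<psi>'''(s)| \<le> \<lambda>_3 \<surd>d |\<Delta>|^3 as long as s |\<Delta>| \<le> |\<theta>s|, because the block 1-norm of \<Delta> is at most \<surd>d |\<Delta>|.
  Hence \<psi>'' \<ge> \<psi>''(0)/2 on [0, r/|\<Delta>|] whenever \<surd>d \<lambda>_3 r \<le> \<lambda>_min/2, and integrating twice gives
  \<psi>(1) - \<psi>(0) \<ge> \<psi>'(0) + \<lambda>_min |\<Delta>| r / 4. The gradient condition bounds \<psi>'(0) below by -\<lambda>/4 times the
  block 1-norm of \<Delta>, and the minimality of \<theta>h bounds \<psi>(1) - \<psi>(0) above by \<lambda> (|\<theta>s|_1 - |\<theta>h|_1).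
  If |\<Delta>| exceeded B = 10 \<surd>d \<lambda> / \<lambda>_min, the radius r = min B |\<theta>s| would be admissible by the condition
  on d \<lambda>, and the two estimates would contradict each other.\<close>

lemma sum_UNIV_prod:
  "(\<Sum>c\<in>(UNIV::('e::finite \<times> 'b::finite) set). g c) = (\<Sum>t\<in>UNIV. \<Sum>j\<in>UNIV. g (t, j))"
  by (simp add: UNIV_Times_UNIV[symmetric] sum.cartesian_product del: UNIV_Times_UNIV)

lemma inner_eq_sum_vc: "(x::real^'b::finite^'e::finite) \<bullet> y = (\<Sum>c\<in>UNIV. vc x c * vc y c)"
  by (simp add: sum_UNIV_prod inner_vec_def vc_def)

lemma vc_unitv: "vc (unitv c) c' = (if c' = c then 1 else 0)"
  by (cases c; cases c'; simp add: vc_def unitv_def)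

lemma inner_unitv: "(x::real^'b::finite^'e::finite) \<bullet> unitv c = vc x c"
  by (simp add: inner_eq_sum_vc vc_unitv if_distrib cong: if_cong)

lemma vc_add: "vc (x + y) c = vc x c + vc y c"
  by (simp add: vc_def)

lemma vc_scaleR: "vc (a *\<^sub>R x) c = a * vc x c"
  by (simp add: vc_def)

lemma vec_eq_sum_unitv: "(u::real^'b::finite^'e::finite) = (\<Sum>c\<in>UNIV. vc u c *\<^sub>R unitv c)"
  by (simp add: vec_eq_iff unitv_def vc_def if_distrib[of "(*) _"] cong: if_cong)

lemma abs_vc_le_norm: "\<bar>vc (u::real^'b::finite^'e::finite) c\<bar> \<le> norm u"
  unfolding vc_def using component_le_norm_cart Finite_Cartesian_Product.norm_nth_le order_trans
  by blast

definition lin_form :: "('e \<times> 'b \<Rightarrow> real) \<Rightarrow> real^'b^'e \<Rightarrow> real" where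
  "lin_form G u = (\<Sum>c\<in>UNIV. vc u c * G c)"

definition bilin_form :: "('e \<times> 'b \<Rightarrow> 'e \<times> 'b \<Rightarrow> real) \<Rightarrow> real^'b^'e \<Rightarrow> real^'b^'e \<Rightarrow> real" where
  "bilin_form H u v = (\<Sum>c\<in>UNIV. vc u c * (\<Sum>c'\<in>UNIV. vc v c' * H c' c))"

definition cubic_form :: "('e \<times> 'b \<Rightarrow> 'e \<times> 'b \<Rightarrow> 'e \<times> 'b \<Rightarrow> real) \<Rightarrow> real^'b^'e \<Rightarrow> real" where
  "cubic_form T u = (\<Sum>c\<in>UNIV. vc u c * (\<Sum>c'\<in>UNIV. vc u c' * (\<Sum>c''\<in>UNIV. vc u c'' * T c'' c' c)))"

lemma has_real_derivative_along_line:
  assumes "(g has_derivative g') (at (x + s *\<^sub>R u))"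
  shows "((\<lambda>s. g (x + s *\<^sub>R u)) has_real_derivative g' u) (at s)"
proof -
  have "((\<lambda>s. x + s *\<^sub>R u) has_derivative (\<lambda>h. h *\<^sub>R u)) (at s)"
    by (auto intro!: derivative_eq_intros)
  from diff_chain_at[OF this assms]
  have "((\<lambda>s. g (x + s *\<^sub>R u)) has_derivative (\<lambda>h. g' (h *\<^sub>R u))) (at s)"
    by (simp add: o_def)
  moreover have "(\<lambda>h. g' (h *\<^sub>R u)) = (*) (g' u)"
    using has_derivative_linear[OF assms] by (auto simp: linear_scale)
  ultimately show ?thesis by (simp add: has_field_derivative_def)
qed

lemma pd_eq_frechet:
  assumes "(g has_derivative g') (at x)"
  shows "pd g x c = g' (unitv c)"
  unfolding pd_def
  by (rule DERIV_imp_deriv, rule has_real_derivative_along_line) (use assms in simp)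

lemma has_real_derivative_lin_form_pd:
  fixes g :: "real^'b::finite^'e::finite \<Rightarrow> real"
  assumes "\<And>y. g differentiable (at y)"
  shows "((\<lambda>s. g (x + s *\<^sub>R u)) has_real_derivative lin_form (pd g (x + s *\<^sub>R u)) u) (at s)"
proof -
  obtain g' where g': "(g has_derivative g') (at (x + s *\<^sub>R u))"
    using assms unfolding differentiable_def by blast
  have "g' u = g' (\<Sum>c\<in>UNIV. vc u c *\<^sub>R unitv c)"
    by (subst vec_eq_sum_unitv) simp
  also have "\<dots> = lin_form (pd g (x + s *\<^sub>R u)) u"
    using has_derivative_linear[OF g']
    by (simp add: linear_sum linear_scale lin_form_def pd_eq_frechet[OF g'])
  finally show ?thesis
    using has_real_derivative_along_line[OF g'] by simp
qed

section \<open>Derivatives of the loss\<close>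

definition exp_sum :: "('x \<Rightarrow> real^'b^'e) \<Rightarrow> (nat \<Rightarrow> 'x) \<Rightarrow> nat \<Rightarrow> real^'b^'e \<Rightarrow> real" where
  "exp_sum f xq nq y = (\<Sum>i<nq. exp (y \<bullet> f (xq i)))"

definition exp_moment :: "('x \<Rightarrow> real^'b^'e) \<Rightarrow> (nat \<Rightarrow> 'x) \<Rightarrow> nat \<Rightarrow> real^'b^'e \<Rightarrow> 'e \<times> 'b \<Rightarrow> real" where
  "exp_moment f xq nq y c = (\<Sum>i<nq. exp (y \<bullet> f (xq i)) * vc (f (xq i)) c)"

definition exp_moment2 ::
    "('x \<Rightarrow> real^'b^'e) \<Rightarrow> (nat \<Rightarrow> 'x) \<Rightarrow> nat \<Rightarrow> real^'b^'e \<Rightarrow> 'e \<times> 'b \<Rightarrow> 'e \<times> 'b \<Rightarrow> real" where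
  "exp_moment2 f xq nq y c c' = (\<Sum>i<nq. exp (y \<bullet> f (xq i)) * vc (f (xq i)) c * vc (f (xq i)) c')"

definition loss_grad :: "('x \<Rightarrow> real^'b^'e) \<Rightarrow> (nat \<Rightarrow> 'x) \<Rightarrow> nat \<Rightarrow> (nat \<Rightarrow> 'x) \<Rightarrow> nat
                          \<Rightarrow> real^'b^'e \<Rightarrow> 'e \<times> 'b \<Rightarrow> real" where
  "loss_grad f xp np xq nq y c =
     - (1 / real np) * (\<Sum>i<np. vc (f (xp i)) c) + exp_moment f xq nq y c / exp_sum f xq nq y"

text \<open>The covariance of the features under the exponentially tilted empirical distribution of the
  q-sample.\<close>
definition loss_hess ::
    "('x \<Rightarrow> real^'b^'e) \<Rightarrow> (nat \<Rightarrow> 'x) \<Rightarrow> nat \<Rightarrow> real^'b^'e \<Rightarrow> 'e \<times> 'b \<Rightarrow> 'e \<times> 'b \<Rightarrow> real" where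
  "loss_hess f xq nq y c c' =
     exp_moment2 f xq nq y c c' / exp_sum f xq nq y
     - exp_moment f xq nq y c * exp_moment f xq nq y c' / (exp_sum f xq nq y * exp_sum f xq nq y)"

lemma exp_sum_pos: "nq \<ge> 1 \<Longrightarrow> exp_sum f xq nq y > 0"
  unfolding exp_sum_def by (rule sum_pos) (auto simp: lessThan_empty_iff)

lemma has_derivative_loss:
  assumes "nq \<ge> 1"
  shows "(loss f xp np xq nq has_derivative
     (\<lambda>h. - (1 / real np) * (\<Sum>i<np. h \<bullet> f (xp i))
          + (\<Sum>i<nq. exp (y \<bullet> f (xq i)) * (h \<bullet> f (xq i))) / exp_sum f xq nq y)) (at y)"
proof -
  have pos: "(1 / real nq) * exp_sum f xq nq y > 0"
    using exp_sum_pos[OF assms, of f xq y] assms by (auto intro: divide_pos_pos)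
  have "(loss f xp np xq nq has_derivative
      (\<lambda>h. - (1 / real np) * (\<Sum>i<np. h \<bullet> f (xp i))
        + ((1 / real nq) * (\<Sum>i<nq. (h \<bullet> f (xq i)) * exp (y \<bullet> f (xq i))))
          * inverse ((1 / real nq) * exp_sum f xq nq y))) (at y)"
    unfolding loss_def[abs_def] using pos unfolding exp_sum_def
    by (intro has_derivative_add has_derivative_mult_right has_derivative_ln has_derivative_sum
        has_derivative_exp has_derivative_inner_left has_derivative_ident)
  then show ?thesis
    by (rule has_derivative_eq_rhs) (use assms in \<open>auto simp: fun_eq_iff field_simps mult_ac\<close>)
qed

lemma has_derivative_exp_sum:
  "(exp_sum f xq nq has_derivative (\<lambda>h. \<Sum>i<nq. (h \<bullet> f (xq i)) * exp (y \<bullet> f (xq i)))) (at y)"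
  unfolding exp_sum_def[abs_def]
  by (intro has_derivative_sum has_derivative_exp has_derivative_inner_left has_derivative_ident)

lemma has_derivative_exp_moment:
  "((\<lambda>y. exp_moment f xq nq y c) has_derivative
     (\<lambda>h. \<Sum>i<nq. (h \<bullet> f (xq i)) * exp (y \<bullet> f (xq i)) * vc (f (xq i)) c)) (at y)"
  unfolding exp_moment_def[abs_def]
  by (intro has_derivative_sum has_derivative_exp has_derivative_inner_left has_derivative_ident
      has_derivative_mult_left)

lemma has_derivative_exp_moment2:
  "((\<lambda>y. exp_moment2 f xq nq y c c') has_derivative
     (\<lambda>h. \<Sum>i<nq. (h \<bullet> f (xq i)) * exp (y \<bullet> f (xq i)) * vc (f (xq i)) c * vc (f (xq i)) c')) (at y)"
  unfolding exp_moment2_def[abs_def]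
  by (intro has_derivative_sum has_derivative_exp has_derivative_inner_left has_derivative_ident
      has_derivative_mult_left)

lemma grad_loss_eq:
  fixes f :: "'x \<Rightarrow> real^'b::finite^'e::finite"
  assumes "nq \<ge> 1"
  shows "grad (loss f xp np xq nq) y c = loss_grad f xp np xq nq y c"
  unfolding grad_def pd_eq_frechet[OF has_derivative_loss[OF assms]] loss_grad_def exp_moment_def
  by (simp add: inner_commute[of "unitv c"] inner_unitv mult.commute)

lemma has_derivative_loss_grad:
  assumes "nq \<ge> 1"
  shows "((\<lambda>y. loss_grad f xp np xq nq y c) has_derivative (\<lambda>h.
     ((\<Sum>i<nq. (h \<bullet> f (xq i)) * exp (y \<bullet> f (xq i)) * vc (f (xq i)) c) * exp_sum f xq nq y
      - exp_moment f xq nq y c * (\<Sum>i<nq. (h \<bullet> f (xq i)) * exp (y \<bullet> f (xq i))))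
      / (exp_sum f xq nq y * exp_sum f xq nq y))) (at y)"
proof -
  have "exp_sum f xq nq y \<noteq> 0"
    using exp_sum_pos[OF assms] by (metis less_irrefl)
  from has_derivative_add[OF has_derivative_const
      has_derivative_divide'[OF has_derivative_exp_moment has_derivative_exp_sum this]]
  show ?thesis
    unfolding loss_grad_def[abs_def] by (rule has_derivative_eq_rhs) simp
qed

lemma hess_loss_eq:
  fixes f :: "'x \<Rightarrow> real^'b::finite^'e::finite"
  assumes "nq \<ge> 1"
  shows "hess (loss f xp np xq nq) y c c' = loss_hess f xq nq y c c'"
proof -
  have "hess (loss f xp np xq nq) y c c' = pd (\<lambda>y. loss_grad f xp np xq nq y c') y c"
    unfolding hess_def grad_loss_eq[OF assms] ..
  also have "\<dots> = loss_hess f xq nq y c c'"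
    unfolding pd_eq_frechet[OF has_derivative_loss_grad[OF assms]] loss_hess_def
      exp_moment2_def exp_moment_def
    using exp_sum_pos[OF assms, of f xq y]
    by (simp add: inner_commute[of "unitv c"] inner_unitv field_simps power2_eq_square)
  finally show ?thesis .
qed

lemma loss_hess_differentiable:
  assumes "nq \<ge> 1"
  shows "(\<lambda>y. loss_hess f xq nq y c c') differentiable (at y)"
proof -
  have nz: "exp_sum f xq nq y \<noteq> 0"
    using exp_sum_pos[OF assms] by (metis less_irrefl)
  show ?thesis
    unfolding differentiable_def loss_hess_def[abs_def]
    by (rule exI, rule has_derivative_diff[OF
          has_derivative_divide'[OF has_derivative_exp_moment2 has_derivative_exp_sum nz]
          has_derivative_divide'[OF has_derivative_mult[OF has_derivative_exp_moment
            has_derivative_exp_moment] has_derivative_mult[OF has_derivative_exp_sum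
            has_derivative_exp_sum]]]) (use nz in simp)
qed

lemma loss_hess_sym: "loss_hess f xq nq y c c' = loss_hess f xq nq y c' c"
  by (simp add: loss_hess_def exp_moment2_def mult_ac)

lemma lin_form_exp_moment:
  "lin_form (exp_moment f xq nq y) u = (\<Sum>i<nq. exp (y \<bullet> f (xq i)) * (u \<bullet> f (xq i)))"
  unfolding lin_form_def exp_moment_def inner_eq_sum_vc sum_distrib_left
  by (subst sum.swap) (simp add: mult_ac)

lemma bilin_form_exp_moment2:
  "bilin_form (exp_moment2 f xq nq y) u u = (\<Sum>i<nq. exp (y \<bullet> f (xq i)) * (u \<bullet> f (xq i))\<^sup>2)"
proof -
  have "bilin_form (exp_moment2 f xq nq y) u u
     = (\<Sum>c\<in>UNIV. vc u c * (\<Sum>i<nq. exp (y \<bullet> f (xq i)) * (u \<bullet> f (xq i)) * vc (f (xq i)) c))"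
    unfolding bilin_form_def exp_moment2_def inner_eq_sum_vc sum_distrib_left sum_distrib_right
    by (rule sum.cong[OF refl], subst sum.swap) (simp add: mult_ac)
  also have "\<dots> = (\<Sum>i<nq. exp (y \<bullet> f (xq i)) * (u \<bullet> f (xq i)) * (u \<bullet> f (xq i)))"
    unfolding inner_eq_sum_vc[of u "f (xq _)"] sum_distrib_left sum_distrib_right
    by (subst sum.swap) (simp add: mult_ac)
  finally show ?thesis by (simp add: power2_eq_square mult_ac)
qed

lemma bilin_form_loss_hess:
  "bilin_form (loss_hess f xq nq y) u u
   = (\<Sum>i<nq. exp (y \<bullet> f (xq i)) * (u \<bullet> f (xq i))\<^sup>2) / exp_sum f xq nq y
     - (\<Sum>i<nq. exp (y \<bullet> f (xq i)) * (u \<bullet> f (xq i)))\<^sup>2 / (exp_sum f xq nq y)\<^sup>2"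
proof -
  define Z where "Z = exp_sum f xq nq y"
  have "bilin_form (loss_hess f xq nq y) u u
     = bilin_form (exp_moment2 f xq nq y) u u / Z
       - lin_form (exp_moment f xq nq y) u * lin_form (exp_moment f xq nq y) u / (Z * Z)"
    unfolding bilin_form_def lin_form_def loss_hess_def Z_def[symmetric] right_diff_distrib
      sum_subtractf sum_divide_distrib sum_distrib_left sum_distrib_right
    by (simp add: mult_ac)
  then show ?thesis
    unfolding bilin_form_exp_moment2 lin_form_exp_moment Z_def by (simp add: power2_eq_square)
qed

lemma bilin_form_loss_hess_nonneg:
  assumes "nq \<ge> 1"
  shows "bilin_form (loss_hess f xq nq y) u u \<ge> 0"
proof -
  define w where "w i = exp (y \<bullet> f (xq i))" for i
  define b where "b i = u \<bullet> f (xq i)" for i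
  define Z where "Z = exp_sum f xq nq y"
  have Z: "Z = (\<Sum>i<nq. w i)" and Zpos: "Z > 0"
    unfolding Z_def exp_sum_def w_def using exp_sum_pos[OF assms] by (auto simp: exp_sum_def)
  have "(\<Sum>i<nq. sqrt (w i) * (sqrt (w i) * b i))\<^sup>2
      \<le> (\<Sum>i<nq. (sqrt (w i))\<^sup>2) * (\<Sum>i<nq. (sqrt (w i) * b i)\<^sup>2)"
    by (rule Cauchy_Schwarz_ineq_sum)
  then have cs: "(\<Sum>i<nq. w i * b i)\<^sup>2 \<le> Z * (\<Sum>i<nq. w i * (b i)\<^sup>2)"
    unfolding Z by (simp add: w_def power_mult_distrib mult.assoc[symmetric])
  have "0 \<le> (Z * (\<Sum>i<nq. w i * (b i)\<^sup>2) - (\<Sum>i<nq. w i * b i)\<^sup>2) / Z\<^sup>2"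
    using cs by simp
  also have "\<dots> = bilin_form (loss_hess f xq nq y) u u"
    unfolding bilin_form_loss_hess w_def[symmetric] b_def[symmetric] Z_def[symmetric]
    using Zpos by (simp add: field_simps power2_eq_square)
  finally show ?thesis .
qed

lemma has_real_derivative_loss_line:
  fixes f :: "'x \<Rightarrow> real^'b::finite^'e::finite"
  assumes "nq \<ge> 1"
  shows "((\<lambda>s. loss f xp np xq nq (x + s *\<^sub>R u)) has_real_derivative
           lin_form (grad (loss f xp np xq nq) (x + s *\<^sub>R u)) u) (at s)"
  unfolding grad_def[abs_def]
  by (intro has_real_derivative_lin_form_pd)
     (meson has_derivative_loss[OF assms] differentiable_def)

lemma has_real_derivative_grad_loss_line:
  fixes f :: "'x \<Rightarrow> real^'b::finite^'e::finite"
  assumes "nq \<ge> 1"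
  shows "((\<lambda>s. lin_form (grad (loss f xp np xq nq) (x + s *\<^sub>R u)) u) has_real_derivative
           bilin_form (hess (loss f xp np xq nq) (x + s *\<^sub>R u)) u u) (at s)"
proof -
  have "(\<lambda>y. grad (loss f xp np xq nq) y c) differentiable (at y)" for c y
    unfolding grad_loss_eq[OF assms] differentiable_def
    using has_derivative_loss_grad[OF assms] by blast
  then show ?thesis
    unfolding lin_form_def bilin_form_def hess_def
    by (intro DERIV_sum DERIV_cmult has_real_derivative_lin_form_pd[
          where g = "\<lambda>y. grad (loss f xp np xq nq) y _", unfolded lin_form_def])
qed

lemma has_real_derivative_hess_loss_line:
  fixes f :: "'x \<Rightarrow> real^'b::finite^'e::finite"
  assumes "nq \<ge> 1"
  shows "((\<lambda>s. bilin_form (hess (loss f xp np xq nq) (x + s *\<^sub>R u)) u u) has_real_derivative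
           cubic_form (third (loss f xp np xq nq) (x + s *\<^sub>R u)) u) (at s)"
proof -
  have "(\<lambda>y. hess (loss f xp np xq nq) y c' c) differentiable (at y)" for c c' y
    unfolding hess_loss_eq[OF assms] by (rule loss_hess_differentiable[OF assms])
  then show ?thesis
    unfolding bilin_form_def cubic_form_def third_def
    by (intro DERIV_sum DERIV_cmult has_real_derivative_lin_form_pd[
          where g = "\<lambda>y. hess (loss f xp np xq nq) y _ _", unfolded lin_form_def])
qed

section \<open>Block eigenvalues and Rayleigh quotients\<close>

definition block_supported :: "'e set \<Rightarrow> real^'b^'e \<Rightarrow> bool" where
  "block_supported S x \<longleftrightarrow> (\<forall>t. t \<notin> S \<longrightarrow> x $ t = 0)"

lemma block_supported_add_scaleR:
  "block_supported S x \<Longrightarrow> block_supported S y \<Longrightarrow> block_supported S (x + a *\<^sub>R y)"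
  by (simp add: block_supported_def)

lemma block_supported_scaleR: "block_supported S x \<Longrightarrow> block_supported S (a *\<^sub>R x)"
  by (simp add: block_supported_def)

lemma bilin_form_sym:
  assumes "\<And>c c'. H c c' = H c' c"
  shows "bilin_form H u v = bilin_form H v (u::real^'b::finite^'e::finite)"
  unfolding bilin_form_def sum_distrib_left
  by (subst sum.swap) (simp add: mult_ac assms[of _ "_::'e \<times> 'b"])

lemma bilin_form_add_scaleR:
  "bilin_form H (v + t *\<^sub>R w) (v + t *\<^sub>R w)
   = bilin_form H v v + t * bilin_form H w v + t * bilin_form H v w + t\<^sup>2 * bilin_form H w w"
  unfolding bilin_form_def vc_add vc_scaleR
  by (simp add: algebra_simps sum.distrib sum_distrib_left power2_eq_square)

lemma bilin_form_scaleR: "bilin_form H (a *\<^sub>R x) (a *\<^sub>R x) = a\<^sup>2 * bilin_form H x x"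
  unfolding bilin_form_def vc_scaleR
  by (simp add: sum_distrib_left power2_eq_square mult_ac)

lemma bilin_form_zero [simp]: "bilin_form H 0 0 = 0"
  by (simp add: bilin_form_def vc_def)

lemma nonneg_quadratic_imp_linear_coeff_zero:
  fixes a b :: real
  assumes "\<And>t. a * t + b * t\<^sup>2 \<ge> 0"
  shows "a = 0"
proof (rule ccontr)
  assume a: "a \<noteq> 0"
  define k where "k = \<bar>b\<bar> + 1"
  have k: "k > 0" "b < k"
    unfolding k_def by auto
  have "a * (- a / k) + b * (- a / k)\<^sup>2 = a\<^sup>2 * (b - k) / k\<^sup>2"
    using k by (simp add: field_simps power2_eq_square)
  also have "\<dots> < 0"
    using a k by (intro divide_neg_pos mult_pos_neg) auto
  finally show False
    using assms[of "- a / k"] by simp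
qed

lemma bilin_form_attains_min_on_unit_support:
  fixes H :: "'e::finite \<times> 'b::finite \<Rightarrow> 'e \<times> 'b \<Rightarrow> real" and u :: "real^'b^'e"
  assumes "block_supported S u" "u \<noteq> 0"
  obtains v where "norm v = 1" "block_supported S v"
    "\<And>x. block_supported S x \<Longrightarrow> bilin_form H v v * (norm x)\<^sup>2 \<le> bilin_form H x x"
proof -
  define K where "K = {x::real^'b^'e. norm x = 1 \<and> block_supported S x}"
  have unit_in_K: "x /\<^sub>R norm x \<in> K" if "block_supported S x" "x \<noteq> 0" for x
    using that by (auto simp: K_def block_supported_scaleR)
  have "closed K"
    unfolding K_def block_supported_def
    by (intro closed_Collect_conj closed_Collect_all closed_Collect_imp closed_Collect_eq
        continuous_intros) auto
  moreover have "bounded K"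
    unfolding K_def bounded_iff by auto
  moreover have "continuous_on K (\<lambda>x. bilin_form H x x)"
    unfolding bilin_form_def vc_def by (intro continuous_intros)
  ultimately obtain v where v: "v \<in> K" and vmin: "\<forall>x\<in>K. bilin_form H v v \<le> bilin_form H x x"
    using continuous_attains_inf[of K] unit_in_K[OF assms] by (auto simp: compact_eq_bounded_closed)
  have "bilin_form H v v * (norm x)\<^sup>2 \<le> bilin_form H x x" if "block_supported S x" for x
  proof (cases "x = 0")
    case False
    have "bilin_form H v v \<le> bilin_form H (x /\<^sub>R norm x) (x /\<^sub>R norm x)"
      using vmin unit_in_K[OF that False] by blast
    also have "\<dots> = bilin_form H x x / (norm x)\<^sup>2"
      by (simp add: bilin_form_scaleR power_divide field_simps)
    finally show ?thesis
      using False by (simp add: field_simps)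
  qed simp
  with v show ?thesis
    using that by (auto simp: K_def)
qed

text \<open>The first-order condition of the Rayleigh quotient along each coordinate direction of the
  block.\<close>
lemma bilin_form_minimizer_block_eigenvalue:
  fixes H :: "'e::finite \<times> 'b::finite \<Rightarrow> 'e \<times> 'b \<Rightarrow> real"
  assumes sym: "\<And>c c'. H c c' = H c' c"
    and v: "norm v = 1" "block_supported S v"
    and vmin: "\<And>x. block_supported S x \<Longrightarrow> bilin_form H v v * (norm x)\<^sup>2 \<le> bilin_form H x x"
  shows "bilin_form H v v \<in> block_eigenvalues H S"
proof -
  define \<mu> where "\<mu> = bilin_form H v v"
  have eig: "(\<Sum>c'\<in>coords S. H c c' * vc v c') = \<mu> * vc v c" if c: "c \<in> coords S" for c
  proof -
    define w where "w = unitv c"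
    have w: "block_supported S w"
      using c by (cases c) (auto simp: w_def unitv_def coords_def block_supported_def vec_eq_iff)
    have norm_sq: "(norm (v + t *\<^sub>R w))\<^sup>2 = 1 + 2 * t * vc v c + t\<^sup>2" for t
      using v(1) unfolding power2_norm_eq_inner
      by (simp add: w_def inner_add_left inner_add_right inner_commute[of "unitv c"] inner_unitv
          vc_unitv vc_add vc_scaleR norm_eq_1 power2_eq_square algebra_simps)
    have "(2 * bilin_form H w v - 2 * \<mu> * vc v c) * t + (bilin_form H w w - \<mu>) * t\<^sup>2 \<ge> 0" for t
      using vmin[OF block_supported_add_scaleR[OF v(2) w, of t]]
      unfolding bilin_form_add_scaleR norm_sq bilin_form_sym[where u = v and v = w, OF sym]
        \<mu>_def[symmetric]
      by (simp add: algebra_simps)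
    then have "bilin_form H w v = \<mu> * vc v c"
      using nonneg_quadratic_imp_linear_coeff_zero by fastforce
    moreover have "bilin_form H w v = (\<Sum>c'\<in>UNIV. H c c' * vc v c')"
      unfolding bilin_form_def w_def vc_unitv
      by (simp add: if_distrib[of "\<lambda>x. x * _"] sym[of c] mult.commute cong: if_cong)
    moreover have "(\<Sum>c'\<in>UNIV. H c c' * vc v c') = (\<Sum>c'\<in>coords S. H c c' * vc v c')"
      using v(2)
      by (intro sum.mono_neutral_right) (auto simp: coords_def vc_def block_supported_def)
    ultimately show ?thesis by simp
  qed
  obtain t j where "v $ t $ j \<noteq> 0"
    using v(1) by (metis norm_zero vec_eq_iff zero_index zero_neq_one)
  then have "\<exists>c\<in>coords S. vc v c \<noteq> 0"
    using v(2) by (intro bexI[of _ "(t, j)"]) (auto simp: vc_def coords_def block_supported_def)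
  with eig show ?thesis
    unfolding block_eigenvalues_def \<mu>_def by blast
qed

lemma bilin_form_ge_block_eigenvalue_bound:
  fixes H :: "'e::finite \<times> 'b::finite \<Rightarrow> 'e \<times> 'b \<Rightarrow> real"
  assumes "\<And>c c'. H c c' = H c' c"
    and "\<forall>\<mu>\<in>block_eigenvalues H S. \<mu> \<ge> m"
    and "block_supported S u"
  shows "m * (norm u)\<^sup>2 \<le> bilin_form H u u"
proof (cases "u = 0")
  case False
  then obtain v where v: "norm v = 1" "block_supported S v"
    and vmin: "\<And>x. block_supported S x \<Longrightarrow> bilin_form H v v * (norm x)\<^sup>2 \<le> bilin_form H x x"
    using bilin_form_attains_min_on_unit_support assms(3) by blast
  have "m \<le> bilin_form H v v"
    using bilin_form_minimizer_block_eigenvalue[OF assms(1) v vmin] assms(2) by blast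
  then have "m * (norm u)\<^sup>2 \<le> bilin_form H v v * (norm u)\<^sup>2"
    by (intro mult_right_mono) auto
  also have "\<dots> \<le> bilin_form H u u"
    using vmin assms(3) .
  finally show ?thesis .
qed simp

section \<open>Third-order arrays and block norms\<close>

definition trilin :: "('b \<Rightarrow> 'e \<times> 'b \<Rightarrow> 'e \<times> 'b \<Rightarrow> real) \<Rightarrow> real^'b \<Rightarrow> real^'b^'e \<Rightarrow> real^'b^'e \<Rightarrow> real"
  where "trilin T a u v = (\<Sum>j\<in>UNIV. \<Sum>c\<in>UNIV. \<Sum>c'\<in>UNIV. T j c c' * (a $ j) * vc u c * vc v c')"

lemma abs_trilin_le_sum_abs:
  fixes T :: "'b::finite \<Rightarrow> 'e::finite \<times> 'b \<Rightarrow> 'e \<times> 'b \<Rightarrow> real"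
  assumes "norm a \<le> 1" "norm u \<le> 1" "norm v \<le> 1"
  shows "\<bar>trilin T a u v\<bar> \<le> (\<Sum>j\<in>UNIV. \<Sum>c\<in>UNIV. \<Sum>c'\<in>UNIV. \<bar>T j c c'\<bar>)"
proof -
  have "\<bar>T j c c' * (a $ j) * vc u c * vc v c'\<bar> \<le> \<bar>T j c c'\<bar>" for j c c'
  proof -
    have "\<bar>a $ j\<bar> * \<bar>vc u c\<bar> * \<bar>vc v c'\<bar> \<le> 1"
      using component_le_norm_cart[of a j] abs_vc_le_norm[of u c] abs_vc_le_norm[of v c'] assms
      by (intro mult_le_one) auto
    then have "\<bar>T j c c'\<bar> * (\<bar>a $ j\<bar> * \<bar>vc u c\<bar> * \<bar>vc v c'\<bar>) \<le> \<bar>T j c c'\<bar>"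
      using mult_left_mono[of _ 1 "\<bar>T j c c'\<bar>"] by simp
    then show ?thesis
      by (simp add: abs_mult mult_ac)
  qed
  then show ?thesis
    unfolding trilin_def by (intro order_trans[OF sum_abs] sum_mono order_trans[OF sum_abs]) auto
qed

lemma abs_trilin_le_spec3:
  assumes "norm a = 1" "norm u = 1" "norm v = 1"
  shows "\<bar>trilin T a u v\<bar> \<le> spec3 T"
  unfolding spec3_def trilin_def[symmetric]
proof (rule cSup_upper)
  show "bdd_above {\<bar>trilin T a u v\<bar> |a u v. norm a = 1 \<and> norm u = 1 \<and> norm v = 1}"
    by (rule bdd_aboveI[where M = "\<Sum>j\<in>UNIV. \<Sum>c\<in>UNIV. \<Sum>c'\<in>UNIV. \<bar>T j c c'\<bar>"])
       (auto intro!: abs_trilin_le_sum_abs)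
qed (use assms in blast)

lemma spec3_nonneg: "spec3 (T::'b::finite \<Rightarrow> 'e::finite \<times> 'b \<Rightarrow> 'e \<times> 'b \<Rightarrow> real) \<ge> 0"
proof -
  have "norm (axis undefined 1 :: real^'b) = 1"
    and "norm (axis undefined (axis undefined 1) :: real^'b^'e) = 1"
    by simp_all
  from abs_trilin_le_spec3[OF this(1) this(2) this(2), of T] show ?thesis
    by linarith
qed

lemma trilin_scaleR: "trilin T (x *\<^sub>R a) (y *\<^sub>R u) (z *\<^sub>R v) = x * y * z * trilin T a u v"
  unfolding trilin_def vc_scaleR by (simp add: sum_distrib_left mult_ac)

lemma abs_trilin_le_spec3_norms:
  "\<bar>trilin T a u v\<bar> \<le> spec3 T * norm a * norm u * norm v"
proof (cases "a = 0 \<or> u = 0 \<or> v = 0")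
  case True
  then have "trilin T a u v = 0"
    by (auto simp: trilin_def vc_def)
  then show ?thesis
    using spec3_nonneg[of T] by simp
next
  case False
  then have p: "norm a > 0" "norm u > 0" "norm v > 0"
    by auto
  have "trilin T a u v
        = norm a * norm u * norm v * trilin T (a /\<^sub>R norm a) (u /\<^sub>R norm u) (v /\<^sub>R norm v)"
    using p by (simp add: trilin_scaleR field_simps)
  moreover have "\<bar>trilin T (a /\<^sub>R norm a) (u /\<^sub>R norm u) (v /\<^sub>R norm v)\<bar> \<le> spec3 T"
    using p by (intro abs_trilin_le_spec3) auto
  ultimately show ?thesis
    using p by (simp add: abs_mult mult_left_mono mult_ac)
qed

lemma cubic_form_eq_sum_trilin:
  fixes u :: "real^'b::finite^'e::finite"
  shows "cubic_form T u = (\<Sum>t\<in>UNIV. trilin (\<lambda>j c c'. T (t, j) c c') (u $ t) u u)"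
proof -
  have "cubic_form T u = (\<Sum>c\<in>UNIV. \<Sum>c'\<in>UNIV. \<Sum>c''\<in>UNIV. vc u c * vc u c' * vc u c'' * T c'' c' c)"
    unfolding cubic_form_def by (simp add: sum_distrib_left mult_ac)
  also have "\<dots> = (\<Sum>c''\<in>UNIV. \<Sum>c'\<in>UNIV. \<Sum>c\<in>UNIV. vc u c * vc u c' * vc u c'' * T c'' c' c)"
    by (subst sum.swap, subst (2) sum.swap, subst sum.swap) (rule refl)
  also have "\<dots> = (\<Sum>t\<in>UNIV. trilin (\<lambda>j c c'. T (t, j) c c') (u $ t) u u)"
    unfolding trilin_def sum_UNIV_prod[of "\<lambda>c''. \<Sum>c'\<in>UNIV. _ c'' c'"]
    by (simp add: vc_def mult_ac)
  finally show ?thesis .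
qed

lemma block_l1_le_sqrt_card_norm:
  assumes "finite S"
  shows "(\<Sum>t\<in>S. norm ((x::real^'b::finite^'e::finite) $ t)) \<le> sqrt (real (card S)) * norm x"
proof -
  have "(\<Sum>t\<in>S. norm (x $ t)) \<le> L2_set (\<lambda>t. norm (x $ t)) S * L2_set (\<lambda>t. 1) S"
    using L2_set_mult_ineq[of "\<lambda>t. norm (x $ t)" "\<lambda>t. 1" S] by simp
  also have "\<dots> \<le> norm x * L2_set (\<lambda>t. 1) S"
    unfolding norm_vec_def[of x] L2_set_def
    by (intro mult_right_mono real_sqrt_le_mono sum_mono2) auto
  finally show ?thesis
    by (simp add: L2_set_def mult.commute)
qed

lemma abs_cubic_form_le:
  fixes u :: "real^'b::finite^'e::finite"
  assumes "\<forall>t. spec3 (\<lambda>j c c'. T (t, j) c c') \<le> M"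
  shows "\<bar>cubic_form T u\<bar> \<le> M * (\<Sum>t\<in>UNIV. norm (u $ t)) * (norm u)\<^sup>2"
proof -
  have "\<bar>trilin (\<lambda>j c c'. T (t, j) c c') (u $ t) u u\<bar> \<le> M * norm (u $ t) * (norm u)\<^sup>2" for t
  proof -
    have "\<bar>trilin (\<lambda>j c c'. T (t, j) c c') (u $ t) u u\<bar>
          \<le> spec3 (\<lambda>j c c'. T (t, j) c c') * norm (u $ t) * norm u * norm u"
      by (rule abs_trilin_le_spec3_norms)
    also have "\<dots> \<le> M * norm (u $ t) * norm u * norm u"
      using assms by (intro mult_right_mono) auto
    finally show ?thesis
      by (simp add: power2_eq_square mult_ac)
  qed
  then have "\<bar>cubic_form T u\<bar> \<le> (\<Sum>t\<in>UNIV. M * norm (u $ t) * (norm u)\<^sup>2)"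
    unfolding cubic_form_eq_sum_trilin by (intro order_trans[OF sum_abs] sum_mono)
  then show ?thesis
    by (simp add: sum_distrib_left sum_distrib_right mult_ac)
qed

lemma norm_block_supported:
  "block_supported S x \<Longrightarrow> norm (x::real^'b::finite^'e::finite) = sqrt (\<Sum>t\<in>S. (norm (x $ t))\<^sup>2)"
  unfolding norm_vec_def L2_set_def block_supported_def
  by (subst sum.mono_neutral_right[of UNIV S]) auto

lemma sum_norm_block_supported:
  fixes x :: "real^'b::finite^'e::finite"
  shows "block_supported S x \<Longrightarrow> (\<Sum>t\<in>UNIV. norm (x $ t)) = (\<Sum>t\<in>S. norm (x $ t))"
  unfolding block_supported_def by (intro sum.mono_neutral_right) auto

lemma abs_cubic_form_le_norm_cube:
  fixes u :: "real^'b::finite^'e::finite"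
  assumes "\<forall>t. spec3 (\<lambda>j c c'. T (t, j) c c') \<le> M" and "block_supported S u"
  shows "\<bar>cubic_form T u\<bar> \<le> M * sqrt (real (card S)) * norm u ^ 3"
proof -
  have "0 \<le> M"
    using assms(1) spec3_nonneg order_trans by blast
  then have "M * (\<Sum>t\<in>UNIV. norm (u $ t)) * (norm u)\<^sup>2 \<le> M * (sqrt (real (card S)) * norm u) * (norm u)\<^sup>2"
    unfolding sum_norm_block_supported[OF assms(2)]
    by (intro mult_right_mono mult_left_mono block_l1_le_sqrt_card_norm) auto
  with abs_cubic_form_le[OF assms(1), of u]
  have "\<bar>cubic_form T u\<bar> \<le> M * (sqrt (real (card S)) * norm u) * (norm u)\<^sup>2"
    by (rule order_trans)
  then show ?thesis
    by (simp add: power2_eq_square power3_eq_cube mult_ac)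
qed

lemma sum_norm_diff_le:
  "(\<Sum>t\<in>S. norm (x $ t - y $ t)) \<le> (\<Sum>t\<in>S. norm (x $ t)) + (\<Sum>t\<in>S. norm (y $ t))"
  unfolding sum.distrib[symmetric] by (intro sum_mono norm_triangle_ineq4)

lemma abs_lin_form_le:
  fixes G :: "'e::finite \<times> 'b::finite \<Rightarrow> real"
  assumes "\<forall>t. norm (\<chi> j. - G (t, j)) \<le> W"
  shows "\<bar>lin_form G u\<bar> \<le> W * (\<Sum>t\<in>UNIV. norm (u $ t))"
proof -
  have "\<bar>(u $ t) \<bullet> (\<chi> j. - G (t, j))\<bar> \<le> W * norm (u $ t)" for t
    using order_trans[OF Cauchy_Schwarz_ineq2 mult_left_mono[OF assms[rule_format, of t]]]
    by (simp add: mult.commute)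
  moreover have "lin_form G u = - (\<Sum>t\<in>UNIV. (u $ t) \<bullet> (\<chi> j. - G (t, j)))"
    by (simp add: lin_form_def sum_UNIV_prod inner_vec_def vc_def sum_negf)
  ultimately show ?thesis
    by (simp add: sum_distrib_left order_trans[OF sum_abs sum_mono])
qed

section \<open>Convex functions of one variable\<close>

lemma increment_ge_of_deriv_ge:
  fixes g g' :: "real \<Rightarrow> real"
  assumes "\<And>x. (g has_real_derivative g' x) (at x)" "a \<le> b" "\<And>x. a \<le> x \<Longrightarrow> x \<le> b \<Longrightarrow> k \<le> g' x"
  shows "k * (b - a) \<le> g b - g a"
proof -
  have "(\<lambda>x. g x - k * x) a \<le> (\<lambda>x. g x - k * x) b"
  proof (rule DERIV_nonneg_imp_nondecreasing[OF assms(2)])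
    fix x assume "a \<le> x" "x \<le> b"
    then show "\<exists>y. ((\<lambda>x. g x - k * x) has_real_derivative y) (at x) \<and> y \<ge> 0"
      using assms(3) by (intro exI[of _ "g' x - k"]) (auto intro!: derivative_eq_intros assms(1))
  qed
  then show ?thesis
    by (simp add: algebra_simps)
qed

lemma convex_growth_of_curvature:
  fixes \<psi> \<psi>1 \<psi>2 :: "real \<Rightarrow> real"
  assumes d1: "\<And>s. (\<psi> has_real_derivative \<psi>1 s) (at s)"
    and d2: "\<And>s. (\<psi>1 has_real_derivative \<psi>2 s) (at s)"
    and convex: "\<And>s. \<psi>2 s \<ge> 0"
    and \<sigma>: "0 \<le> \<sigma>" "\<sigma> \<le> 1" and k: "0 \<le> k"
    and curv: "\<And>s. 0 \<le> s \<Longrightarrow> s \<le> \<sigma> \<Longrightarrow> k \<le> \<psi>2 s"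
  shows "\<psi>1 0 + k * \<sigma> / 2 \<le> \<psi> 1 - \<psi> 0"
proof -
  have \<psi>1_ge: "\<psi>1 0 + k * s \<le> \<psi>1 s" if "0 \<le> s" "s \<le> \<sigma>" for s
    using increment_ge_of_deriv_ge[OF d2 that(1), of k] curv that by simp
  have "0 * (\<sigma> - 0) \<le> (\<psi> \<sigma> - \<psi>1 0 * \<sigma> - k * \<sigma>\<^sup>2 / 2) - (\<psi> 0 - \<psi>1 0 * 0 - k * 0\<^sup>2 / 2)"
    using \<psi>1_ge
    by (intro increment_ge_of_deriv_ge[where g = "\<lambda>x. \<psi> x - \<psi>1 0 * x - k * x\<^sup>2 / 2"
          and g' = "\<lambda>x. \<psi>1 x - \<psi>1 0 - k * x", OF _ \<sigma>(1)])
       (auto intro!: derivative_eq_intros d1 simp: algebra_simps)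
  then have "\<psi>1 0 * \<sigma> + k * \<sigma>\<^sup>2 / 2 \<le> \<psi> \<sigma> - \<psi> 0"
    by simp
  moreover have "(\<psi>1 0 + k * \<sigma>) * (1 - \<sigma>) \<le> \<psi> 1 - \<psi> \<sigma>"
  proof (rule increment_ge_of_deriv_ge[OF d1 \<sigma>(2)])
    fix x assume "\<sigma> \<le> x"
    then have "0 * (x - \<sigma>) \<le> \<psi>1 x - \<psi>1 \<sigma>"
      using convex by (intro increment_ge_of_deriv_ge[OF d2])
    then show "\<psi>1 0 + k * \<sigma> \<le> \<psi>1 x"
      using \<psi>1_ge[OF \<sigma>(1) order_refl] by simp
  qed
  moreover have "(\<psi>1 0 + k * \<sigma>) * (1 - \<sigma>) = \<psi>1 0 - \<psi>1 0 * \<sigma> + k * \<sigma> - k * \<sigma>\<^sup>2"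
    by (simp add: algebra_simps power2_eq_square)
  moreover have "k * \<sigma>\<^sup>2 \<le> k * \<sigma>"
    using k \<sigma> by (simp add: power2_eq_square mult_left_le mult_left_mono)
  ultimately show ?thesis
    by linarith
qed

lemma convex_third_order_growth:
  fixes \<psi> \<psi>1 \<psi>2 \<psi>3 :: "real \<Rightarrow> real"
  assumes d1: "\<And>s. (\<psi> has_real_derivative \<psi>1 s) (at s)"
    and d2: "\<And>s. (\<psi>1 has_real_derivative \<psi>2 s) (at s)"
    and d3: "\<And>s. (\<psi>2 has_real_derivative \<psi>3 s) (at s)"
    and convex: "\<And>s. \<psi>2 s \<ge> 0"
    and \<sigma>: "0 \<le> \<sigma>" "\<sigma> \<le> 1"
    and bound: "\<And>s. 0 \<le> s \<Longrightarrow> s \<le> \<sigma> \<Longrightarrow> \<bar>\<psi>3 s\<bar> \<le> M"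
    and small: "M * \<sigma> \<le> \<psi>2 0 / 2"
  shows "\<psi>1 0 + \<psi>2 0 * \<sigma> / 4 \<le> \<psi> 1 - \<psi> 0"
proof -
  have "\<psi>2 0 / 2 \<le> \<psi>2 s" if "0 \<le> s" "s \<le> \<sigma>" for s
  proof -
    have "- M * (s - 0) \<le> \<psi>2 s - \<psi>2 0"
      using bound that by (intro increment_ge_of_deriv_ge[OF d3 that(1)]) force
    moreover have "M * s \<le> M * \<sigma>"
      using bound[of 0] \<sigma> that by (intro mult_left_mono) auto
    ultimately show ?thesis
      using small by simp
  qed
  moreover have "0 \<le> \<psi>2 0 / 2"
    using convex[of 0] by simp
  ultimately show ?thesis
    using convex_growth_of_curvature[OF d1 d2 convex \<sigma>, of "\<psi>2 0 / 2"] by simp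
qed

lemma loss_growth_along_segment:
  fixes f :: "'x \<Rightarrow> real^'b::finite^'e::finite" and xp xq :: "nat \<Rightarrow> 'x" and np nq :: nat
    and S :: "'e set"
  defines "L \<equiv> loss f xp np xq nq"
  assumes nq: "nq \<ge> 1"
    and eig: "\<forall>\<mu>\<in>block_eigenvalues (hess L \<theta>) S. \<mu> \<ge> m"
    and supp: "block_supported S D"
    and third: "\<And>\<delta>. norm \<delta> \<le> R \<Longrightarrow> \<forall>t. spec3 (\<lambda>j c c'. third L (\<theta> + \<delta>) (t, j) c c') \<le> M"
    and r: "0 < r" "r \<le> R" "r \<le> norm D" "sqrt (real (card S)) * M * r \<le> m / 2"
  shows "lin_form (grad L \<theta>) D + m * norm D * r / 4 \<le> L (\<theta> + D) - L \<theta>"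
proof -
  define N where "N = norm D"
  define \<sigma> where "\<sigma> = r / N"
  have N: "0 < N"
    using r unfolding N_def by linarith
  then have \<sigma>: "0 \<le> \<sigma>" "\<sigma> \<le> 1" and \<sigma>N: "\<sigma> * N = r"
    using r by (simp_all add: N_def \<sigma>_def)
  have hess_eq: "hess L y = loss_hess f xq nq y" for y
    unfolding L_def by (intro ext hess_loss_eq[OF nq])
  have convex: "0 \<le> bilin_form (hess L (\<theta> + s *\<^sub>R D)) D D" for s
    unfolding hess_eq by (rule bilin_form_loss_hess_nonneg[OF nq])
  have curv: "m * N\<^sup>2 \<le> bilin_form (hess L (\<theta> + 0 *\<^sub>R D)) D D"
    unfolding N_def hess_eq
    by (rule bilin_form_ge_block_eigenvalue_bound[OF loss_hess_sym])
       (use eig supp in \<open>simp_all add: hess_eq\<close>)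
  have cubic: "\<bar>cubic_form (third L (\<theta> + s *\<^sub>R D)) D\<bar> \<le> M * sqrt (real (card S)) * N ^ 3"
    if "0 \<le> s" "s \<le> \<sigma>" for s
  proof (unfold N_def, rule abs_cubic_form_le_norm_cube[OF third supp])
    show "norm (s *\<^sub>R D) \<le> R"
      using that \<sigma>N r N by (simp add: N_def[symmetric] order_trans[OF mult_right_mono])
  qed
  have "M * sqrt (real (card S)) * N ^ 3 * \<sigma> = sqrt (real (card S)) * M * (\<sigma> * N) * N\<^sup>2"
    by (simp add: power2_eq_square power3_eq_cube mult_ac)
  also have "\<dots> \<le> m / 2 * N\<^sup>2"
    using r(4) unfolding \<sigma>N by (rule mult_right_mono) simp
  also have "\<dots> \<le> bilin_form (hess L (\<theta> + 0 *\<^sub>R D)) D D / 2"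
    using curv by simp
  finally have margin: "M * sqrt (real (card S)) * N ^ 3 * \<sigma>
                         \<le> bilin_form (hess L (\<theta> + 0 *\<^sub>R D)) D D / 2" .
  have "lin_form (grad L (\<theta> + 0 *\<^sub>R D)) D + bilin_form (hess L (\<theta> + 0 *\<^sub>R D)) D D * \<sigma> / 4
      \<le> L (\<theta> + 1 *\<^sub>R D) - L (\<theta> + 0 *\<^sub>R D)"
    unfolding L_def
    by (rule convex_third_order_growth[OF has_real_derivative_loss_line[OF nq]
          has_real_derivative_grad_loss_line[OF nq] has_real_derivative_hess_loss_line[OF nq]
          convex[unfolded L_def] \<sigma> cubic[unfolded L_def] margin[unfolded L_def]])
  moreover have "m * N * r \<le> bilin_form (hess L (\<theta> + 0 *\<^sub>R D)) D D * \<sigma>"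
    using mult_right_mono[OF curv \<sigma>(1)] unfolding \<sigma>N[symmetric]
    by (simp add: power2_eq_square mult_ac)
  ultimately show ?thesis
    unfolding N_def[symmetric] scaleR_zero_left scaleR_one add_0_right by linarith
qed

lemma restricted_minimizer_gain:
  fixes f :: "'x \<Rightarrow> real^'b::finite^'e::finite" and xp xq :: "nat \<Rightarrow> 'x" and np nq :: nat
    and S :: "'e set"
  defines "L \<equiv> loss f xp np xq nq"
  assumes nq: "nq \<ge> 1"
    and eig: "\<forall>\<mu>\<in>block_eigenvalues (hess L \<theta>) S. \<mu> \<ge> m"
    and third: "\<And>\<delta>. norm \<delta> \<le> R \<Longrightarrow> \<forall>t. spec3 (\<lambda>j c c'. third L (\<theta> + \<delta>) (t, j) c c') \<le> M"
    and grad: "\<forall>t. norm (\<chi> j. - grad L \<theta> (t, j)) \<le> lam / 4"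
    and supp: "block_supported S (\<theta>' - \<theta>)"
    and opt: "L \<theta>' + lam * (\<Sum>t\<in>S. norm (\<theta>' $ t)) \<le> L \<theta> + lam * (\<Sum>t\<in>S. norm (\<theta> $ t))"
    and r: "0 < r" "r \<le> R" "r \<le> norm (\<theta>' - \<theta>)" "sqrt (real (card S)) * M * r \<le> m / 2"
  shows "m * norm (\<theta>' - \<theta>) * r
         \<le> lam * ((\<Sum>t\<in>S. norm ((\<theta>' - \<theta>) $ t))
                   + 4 * ((\<Sum>t\<in>S. norm (\<theta> $ t)) - (\<Sum>t\<in>S. norm (\<theta>' $ t))))"
proof -
  have "lin_form (grad L \<theta>) (\<theta>' - \<theta>) + m * norm (\<theta>' - \<theta>) * r / 4 \<le> L \<theta>' - L \<theta>"
    using loss_growth_along_segment[OF nq eig[unfolded L_def] supp third[unfolded L_def] r]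
    by (simp add: L_def)
  moreover have "- lin_form (grad L \<theta>) (\<theta>' - \<theta>) \<le> lam / 4 * (\<Sum>t\<in>S. norm ((\<theta>' - \<theta>) $ t))"
    using abs_le_D2[OF abs_lin_form_le[OF grad, of "\<theta>' - \<theta>"]] sum_norm_block_supported[OF supp]
    by simp
  ultimately show ?thesis
    using opt by (simp add: algebra_simps)
qed

lemma penalized_error_bound_pos:
  fixes m M lam q N R l1 a a' :: real
  assumes growth: "\<And>r. 0 < r \<Longrightarrow> r \<le> R \<Longrightarrow> r \<le> N \<Longrightarrow> q * M * r \<le> m / 2
                          \<Longrightarrow> m * N * r \<le> lam * (l1 + 4 * (a - a'))"
    and triangle: "a \<le> a' + l1" "l1 \<le> a' + a"
    and l1: "l1 \<le> q * N" and a: "a \<le> q * R"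
    and pos: "0 < R" "0 < m" "0 < q" "0 \<le> M" "0 < lam"
    and small: "q\<^sup>2 * lam * (20 * M) \<le> m\<^sup>2"
  shows "N \<le> 10 / m * q * lam"
proof (rule ccontr)
  define B where "B = 10 / m * q * lam"
  assume "\<not> N \<le> 10 / m * q * lam"
  then have NB: "B < N"
    by (simp add: B_def)
  have qlam: "0 < q * lam" and B: "0 < B" and mB: "m * B = 10 * (q * lam)"
    using pos by (simp_all add: B_def)
  have "q * M * B * (2 * m) = 20 * (q * lam) * (q * M)"
    using pos by (simp add: B_def)
  also have "\<dots> \<le> m * m"
    using small by (simp add: power2_eq_square mult_ac)
  finally have qMB: "q * M * B \<le> m / 2"
    using pos by (simp add: field_simps)
  show False
  proof (cases "B \<le> R")
    case True
    have "10 * (q * lam) * N = m * B * N"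
      using mB by simp
    also have "\<dots> \<le> lam * (l1 + 4 * (a - a'))"
      using growth[OF B True _ qMB] NB by (simp add: mult_ac)
    also have "\<dots> \<le> 5 * (q * lam) * N"
      using triangle l1 pos mult_left_mono[of "l1 + 4 * (a - a')" "5 * (q * N)" lam]
      by (simp add: mult_ac)
    finally show False
      using qlam NB B by (simp add: mult.commute)
  next
    case False
    have "q * M * R \<le> q * M * B"
      using False pos by (intro mult_left_mono) auto
    then have "m * N * R \<le> lam * (l1 + 4 * (a - a'))"
      using False NB qMB by (intro growth pos(1)) simp_all
    also have "\<dots> \<le> 5 * (q * lam) * R"
      using triangle a pos mult_left_mono[of "l1 + 4 * (a - a')" "5 * (q * R)" lam]
      by (simp add: mult_ac)
    also have "\<dots> < m * B * R"
      using qlam pos mB by simp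
    also have "\<dots> < m * N * R"
      using NB pos by simp
    finally show False .
  qed
qed

lemma penalized_error_bound:
  fixes m M lam q N R l1 a a' :: real
  assumes growth: "\<And>r. 0 < r \<Longrightarrow> r \<le> R \<Longrightarrow> r \<le> N \<Longrightarrow> q * M * r \<le> m / 2
                          \<Longrightarrow> m * N * r \<le> lam * (l1 + 4 * (a - a'))"
    and triangle: "a \<le> a' + l1" "l1 \<le> a' + a"
    and l1: "l1 \<le> q * N" and a: "a \<le> q * R"
    and pos: "0 < R" "0 < m" "0 < q" "0 \<le> M" "0 \<le> lam"
    and small: "q\<^sup>2 * lam * (20 * M) \<le> m\<^sup>2"
  shows "N \<le> 10 / m * q * lam"
proof (cases "lam = 0")
  case True
  show ?thesis
  proof (rule ccontr)
    assume N: "\<not> N \<le> 10 / m * q * lam"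
    define r where "r = min R (min N (m / (2 * q * M + 1)))"
    have den: "0 < 2 * q * M + 1"
      using pos by (simp add: add_nonneg_pos)
    have r: "0 < r" "r \<le> R" "r \<le> N"
      using pos den True N by (simp_all add: r_def)
    have "q * M * r \<le> q * M * (m / (2 * q * M + 1))"
      using pos by (intro mult_left_mono) (auto simp: r_def)
    also have "\<dots> \<le> m / 2"
      using pos den by (simp add: field_simps)
    finally have "m * N * r \<le> 0"
      using growth[OF r] True by simp
    moreover have "0 < m * N * r"
      using r pos by simp
    ultimately show False
      by linarith
  qed
next
  case False
  with pos show ?thesis
    by (intro penalized_error_bound_pos[OF growth triangle l1 a _ _ _ _ _ small]) simp_all
qed

lemma restricted_error_bound:
  fixes \<theta> \<theta>' :: "real^'b::finite^'e::finite" and S :: "'e set"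
  assumes gain: "\<And>r. 0 < r \<Longrightarrow> r \<le> norm \<theta> \<Longrightarrow> r \<le> norm (\<theta>' - \<theta>)
                   \<Longrightarrow> sqrt (real (card S)) * M * r \<le> m / 2
                   \<Longrightarrow> m * norm (\<theta>' - \<theta>) * r
                       \<le> lam * ((\<Sum>t\<in>S. norm ((\<theta>' - \<theta>) $ t))
                                 + 4 * ((\<Sum>t\<in>S. norm (\<theta> $ t)) - (\<Sum>t\<in>S. norm (\<theta>' $ t))))"
    and nonzero: "\<theta> \<noteq> 0" "S \<noteq> {}"
    and pos: "0 < m" "0 \<le> M" "0 \<le> lam"
    and small: "real (card S) * lam * (20 * M) \<le> m\<^sup>2"
  shows "norm (\<theta>' - \<theta>) \<le> 10 / m * sqrt (real (card S)) * lam"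
proof (rule penalized_error_bound[where R = "norm \<theta>" and N = "norm (\<theta>' - \<theta>)", OF gain])
  show "(\<Sum>t\<in>S. norm (\<theta> $ t)) \<le> (\<Sum>t\<in>S. norm (\<theta>' $ t)) + (\<Sum>t\<in>S. norm ((\<theta>' - \<theta>) $ t))"
    using sum_norm_diff_le[of \<theta>' "\<theta>' - \<theta>" S] by simp
  show "(\<Sum>t\<in>S. norm ((\<theta>' - \<theta>) $ t)) \<le> (\<Sum>t\<in>S. norm (\<theta>' $ t)) + (\<Sum>t\<in>S. norm (\<theta> $ t))"
    using sum_norm_diff_le[of \<theta>' \<theta> S] by simp
  show "(\<Sum>t\<in>S. norm ((\<theta>' - \<theta>) $ t)) \<le> sqrt (real (card S)) * norm (\<theta>' - \<theta>)"
    "(\<Sum>t\<in>S. norm (\<theta> $ t)) \<le> sqrt (real (card S)) * norm \<theta>"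
    by (rule block_l1_le_sqrt_card_norm, simp)+
qed (use nonzero pos small in \<open>simp_all add: card_gt_0_iff\<close>)

lemma restricted_minimizer_error_bound:
  fixes f :: "'x \<Rightarrow> real^'b::finite^'e::finite" and xp xq :: "nat \<Rightarrow> 'x" and np nq :: nat
    and S :: "'e set"
  defines "L \<equiv> loss f xp np xq nq"
  assumes nq: "nq \<ge> 1"
    and eig: "\<forall>\<mu>\<in>block_eigenvalues (hess L \<theta>) S. \<mu> \<ge> m"
    and third: "\<And>\<delta>. norm \<delta> \<le> norm \<theta> \<Longrightarrow> \<forall>t. spec3 (\<lambda>j c c'. third L (\<theta> + \<delta>) (t, j) c c') \<le> M"
    and grad: "\<forall>t. norm (\<chi> j. - grad L \<theta> (t, j)) \<le> lam / 4"
    and supp: "block_supported S (\<theta>' - \<theta>)"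
    and opt: "L \<theta>' + lam * (\<Sum>t\<in>S. norm (\<theta>' $ t)) \<le> L \<theta> + lam * (\<Sum>t\<in>S. norm (\<theta> $ t))"
    and nonzero: "\<theta> \<noteq> 0" "S \<noteq> {}"
    and pos: "0 < m" "0 \<le> M" "0 \<le> lam"
    and small: "real (card S) * lam * (20 * M) \<le> m\<^sup>2"
  shows "norm (\<theta>' - \<theta>) \<le> 10 / m * sqrt (real (card S)) * lam"
proof (rule restricted_error_bound[OF _ nonzero pos small])
  fix r
  assume r: "0 < r" "r \<le> norm \<theta>" "r \<le> norm (\<theta>' - \<theta>)" "sqrt (real (card S)) * M * r \<le> m / 2"
  show "m * norm (\<theta>' - \<theta>) * r
      \<le> lam * ((\<Sum>t\<in>S. norm ((\<theta>' - \<theta>) $ t))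
                + 4 * ((\<Sum>t\<in>S. norm (\<theta> $ t)) - (\<Sum>t\<in>S. norm (\<theta>' $ t))))"
    by (rule restricted_minimizer_gain[OF nq eig[unfolded L_def] third[unfolded L_def]
        grad[unfolded L_def] supp opt[unfolded L_def] r])
qed

text \<open>Only the third-order part of (A3) is used.\<close>
theorem lemma3:
  fixes f :: "real^'m \<Rightarrow> real^'b^'e"
    and xp xq :: "nat \<Rightarrow> real^'m"
    and np nq :: nat
    and \<theta>s \<theta>h :: "real^'b^'e"
    and S :: "'e set"
    and d :: nat
    and lamn lam_min lam_max lam3_max :: real
  assumes E_shape: "\<exists>idx. bij_betw idx (UNIV :: 'e set) {(u, v). 1 \<le> v \<and> v \<le> u \<and> u \<le> CARD('m)}"
    and np_pos: "np \<ge> 1" and nq_pos: "nq \<ge> 1"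
    and S_def: "S = {t. \<theta>s $ t \<noteq> 0}"
    and d_def: "d = card S"
    and A1_pos: "lam_min > 0"
    and A1: "\<forall>\<mu>\<in>block_eigenvalues (hess (loss f xp np xq nq) \<theta>s) S. \<mu> \<ge> lam_min"
    and A3: "\<forall>\<delta> :: real^'b^'e. norm \<delta> \<le> norm \<theta>s \<longrightarrow>
               spec2 (hess (loss f xp np xq nq) (\<theta>s + \<delta>)) \<le> lam_max \<and>
               (\<forall>t. spec3 (\<lambda>j c c'. third (loss f xp np xq nq) (\<theta>s + \<delta>) (t, j) c c') \<le> lam3_max)"
    and hat_supp: "\<forall>t. t \<notin> S \<longrightarrow> \<theta>h $ t = 0"
    and hat_min: "\<forall>\<theta> :: real^'b^'e. (\<forall>t. t \<notin> S \<longrightarrow> \<theta> $ t = 0) \<longrightarrow>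
               loss f xp np xq nq \<theta>h + lamn * (\<Sum>t\<in>S. norm (\<theta>h $ t))
                 \<le> loss f xp np xq nq \<theta> + lamn * (\<Sum>t\<in>S. norm (\<theta> $ t))"
    and lam_cond: "real d * lamn \<le> lam_min ^ 2 / (20 * lam3_max)"
    and w_cond: "\<forall>t. norm (\<chi> j. - grad (loss f xp np xq nq) \<theta>s (t, j)) \<le> lamn / 4"
  shows "sqrt (\<Sum>t\<in>S. (norm (\<theta>s $ t - \<theta>h $ t))\<^sup>2) \<le> 10 / lam_min * sqrt (real d) * lamn"
proof -
  have supp_s: "block_supported S \<theta>s"
    using S_def by (simp add: block_supported_def)
  have supp_D: "block_supported S (\<theta>h - \<theta>s)"
    using supp_s hat_supp by (simp add: block_supported_def)
  have third: "\<And>\<delta>. norm \<delta> \<le> norm \<theta>s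
                 \<Longrightarrow> \<forall>t. spec3 (\<lambda>j c c'. third (loss f xp np xq nq) (\<theta>s + \<delta>) (t, j) c c') \<le> lam3_max"
    using A3 by blast
  have "spec3 (\<lambda>j c c'. third (loss f xp np xq nq) (\<theta>s + 0) (undefined, j) c c') \<le> lam3_max"
    using third[of 0] by simp
  then have lam3: "0 \<le> lam3_max"
    by (rule order_trans[OF spec3_nonneg])
  have lamn: "0 \<le> lamn"
    using order_trans[OF norm_ge_zero w_cond[rule_format]] by simp
  have "sqrt (\<Sum>t\<in>S. (norm (\<theta>s $ t - \<theta>h $ t))\<^sup>2) = norm (\<theta>h - \<theta>s)"
    unfolding norm_block_supported[OF supp_D] by (simp add: norm_minus_commute)
  moreover have "norm (\<theta>h - \<theta>s) \<le> 10 / lam_min * sqrt (real (card S)) * lamn" if "S \<noteq> {}"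
  proof (rule restricted_minimizer_error_bound[OF nq_pos A1 third w_cond supp_D])
    show "\<theta>s \<noteq> 0"
      using S_def that by auto
    show "real (card S) * lamn * (20 * lam3_max) \<le> lam_min\<^sup>2"
      using lam_cond lam3 d_def by (cases "lam3_max = 0") (auto simp: field_simps)
    show "loss f xp np xq nq \<theta>h + lamn * (\<Sum>t\<in>S. norm (\<theta>h $ t))
        \<le> loss f xp np xq nq \<theta>s + lamn * (\<Sum>t\<in>S. norm (\<theta>s $ t))"
      using supp_s by (intro hat_min[rule_format]) (simp add: block_supported_def)
  qed (use that A1_pos lam3 lamn in simp_all)
  ultimately show ?thesis
    using d_def by (cases "S = {}") simp_all
qed

end
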